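(* Let $\mathcal{Q}$ be a set of generalized quantifiers of width $1$, $d\in\mathbb{N}$, and $(\mathfrak{M},w)$, $(\mathfrak{N},v)$ pointed Kripke models. If $\mathfrak{N},v\Vdash\varphi^{\mathcal{Q},d}_{\mathfrak{M}\sqcup\mathfrak{N},w}$, then $\mathfrak{M},w\sim^d_{\mathcal{Q}}\mathfrak{N},v$.
   Context: Kripke models: fix a finite set $\Phi$ of proposition symbols. A Kripke model is $\mathfrak{M}=(V,E,\ell)$ with $V$ a finite non-empty set, $E\subseteq V\times V$, and $\ell:V\to\mathcal{P}(\Phi)$. For $u\in V$, $N(u)=\{u'\mid (u,u')\in E\}$. A pointed Kripke model is $(\mathfrak{M},w)$ with $w\in V$; $\mathfrak{M}\sqcup\mathfrak{N}$ is the disjoint union. A generalized quantifier (of width 1) is a class $Q$ of pairs $(D,P)$ with $P\subseteq D$, closed under isomorphism; $\mathfrak{M},u\Vdash\langle Q\rangle\varphi$ iff $(N(u),\{u'\in N(u)\mid \mathfrak{M},u'\Vdash\varphi\})\in Q$. $\mathrm{PL}(\mathcal{Q})$: formulas $\varphi::=\bot\mid p\mid\neg\varphi\mid\varphi\wedge\varphi\mid\varphi\vee\varphi\mid\langle Q\rangle\varphi$, usual Boolean semantics, $\mathfrak{M},u\Vdash p$ iff $p\in\ell(u)$; $\equiv^d_{\mathrm{PL}(\mathcal{Q})}$ is indistinguishability by formulas of modal depth $\le d$. Types: for a Kripke model $\mathfrak{K}$ and $u\in\mathfrak{K}$, $\varphi^{\mathcal{Q},0}_{\mathfrak{K},u}=\bigwedge\{p\mid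 \mathfrak{K},u\Vdash p\}\wedge\bigwedge\{\neg p\mid \mathfrak{K},u\Vdash\neg p\}$, and $\varphi^{\mathcal{Q},d+1}_{\mathfrak{K},u}$ is the conjunction of $\varphi^{\mathcal{Q},0}_{\mathfrak{K},u}$, of all $\langle Q\rangle\bigvee_{\psi\in C}\psi$ true at $(\mathfrak{K},u)$, and of all $\neg\langle Q\rangle\bigvee_{\psi\in C}\psi$ true at $(\mathfrak{K},u)$, where $Q$ ranges over $\mathcal{Q}$ and $C$ over subsets of $\{\varphi^{\mathcal{Q},d}_{\mathfrak{K},u'}\mid u'\in\mathfrak{K}\}$ (infinitary conjunctions allowed if $\mathcal{Q}$ is infinite; satisfied iff every conjunct is). $\mathcal{Q}$-bisimulation game on $(\mathfrak{M},w)$, $(\mathfrak{N},v)$: two pebbles start on $w$ and $v$; Player 1 starts as attacker, Player 2 as defender (roles may swap). At the start of a round the pebbles lie on nodes $a,b$ of $\mathfrak{M}\sqcup\mathfrak{N}$. (i) The attacker selects one pebble, say on $a$, a $Q\in\mathcal{Q}$, and $X\subseteq N(a)$ with $(N(a),X)\in Q$; then chooses $P\subseteq N(b)$. The defender may contest $P$ by placing one pebble on a node of $P$ and the other on a node of $N(a)$; a new round starts. (ii) Otherwise the defender chooses $X'\subseteq N(b)$ with $(N(b),X')\in Q$ and $P\subseteq X'$. (iii) The attacker either moves one pebble onto a node of $N(b)\setminus X'$ and the other onto a node of $X$ and the players swap roles, or moves one pebble onto a node of $X'$, after which the defender moves the other onto a node of $X\cup P$; a new round starts. (iv) Whenever $X$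 (resp. $X'$) is chosen, the other player may contest it by moving one pebble onto a node of that set and the other onto a node of $N(a)\setminus X$ (resp. $N(b)\setminus X'$), then taking the role of defender; a new round starts. The current attacker wins if at the start of a round the pebbled nodes disagree on some proposition symbol; a player who must choose a subset but cannot loses; infinite plays are won by Player 2. In the $d$-round game Player 2 wins if Player 1 has not won after $d$ rounds; $\mathfrak{M},w\sim^d_{\mathcal{Q}}\mathfrak{N},v$ means Player 2 has a winning strategy in it. *)

theory Defs
  imports Main
begin

record ('v, 'p) kripke =
  V   :: "'v set"
  Ed  :: "('v \<times> 'v) set"
  lab :: "'v \<Rightarrow> 'p set"

definition kripke_model :: "'p set \<Rightarrow> ('v, 'p) kripke \<Rightarrow> bool" where
  "kripke_model Phi K \<longleftrightarrow> finite (V K) \<and> V K \<noteq> {} \<and> Ed K \<subseteq> V K \<times> V K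
     \<and> (\<forall>u\<in>V K. lab K u \<subseteq> Phi)"

definition nbr :: "('v, 'p) kripke \<Rightarrow> 'v \<Rightarrow> 'v set" where
  "nbr K u = {u'. (u, u') \<in> Ed K}"

definition dunion :: "('a, 'p) kripke \<Rightarrow> ('b, 'p) kripke \<Rightarrow> ('a + 'b, 'p) kripke" where
  "dunion M N = \<lparr> V = Inl ` V M \<union> Inr ` V N,
                  Ed = map_prod Inl Inl ` Ed M \<union> map_prod Inr Inr ` Ed N,
                  lab = case_sum (lab M) (lab N) \<rparr>"

text \<open>An isomorphism-closed class of pairs (D,P), P \<subseteq> D.  Since all Kripke models
  are finite, only finite D matter, and on finite structures such a class is
  determined exactly by the set of pairs (|D|,|P|) it contains.\<close>
type_synonym gq = "(nat \<times> nat) set"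

definition inQ :: "gq \<Rightarrow> 'v set \<Rightarrow> 'v set \<Rightarrow> bool" where
  "inQ Q D P \<longleftrightarrow> P \<subseteq> D \<and> (card D, card P) \<in> Q"

definition holdsQ :: "gq \<Rightarrow> ('v, 'p) kripke \<Rightarrow> 'v \<Rightarrow> ('v \<Rightarrow> bool) \<Rightarrow> bool" where
  "holdsQ Q K u psi \<longleftrightarrow> inQ Q (nbr K u) {u' \<in> nbr K u. psi u'}"

text \<open>sat_type Phi Qs d K u X x  means  X, x satisfies the type phi^{Qs,d}_{K,u}.
  This is the literal unfolding of the satisfaction of the (possibly infinitary)
  conjunction: the depth-0 part says x agrees with u on every proposition of Phi;
  the depth-(d+1) part says that, for every Q in Qs and every set C of depth-d types
  of nodes of K (C given as the types of the nodes in a set U of nodes of K),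
  <Q> (OR C) holds at x in X iff it holds at u in K.\<close>
fun self_type :: "'p set \<Rightarrow> gq set \<Rightarrow> nat \<Rightarrow> ('v, 'p) kripke \<Rightarrow> 'v \<Rightarrow> 'v \<Rightarrow> bool" where
  "self_type Phi Qs 0 K u x = (\<forall>p\<in>Phi. p \<in> lab K x \<longleftrightarrow> p \<in> lab K u)"
| "self_type Phi Qs (Suc d) K u x =
     ((\<forall>p\<in>Phi. p \<in> lab K x \<longleftrightarrow> p \<in> lab K u) \<and>
      (\<forall>Q\<in>Qs. \<forall>U. U \<subseteq> V K \<longrightarrow>
         (holdsQ Q K x (\<lambda>y. \<exists>u'\<in>U. self_type Phi Qs d K u' y)
          \<longleftrightarrow> holdsQ Q K u (\<lambda>y. \<exists>u'\<in>U. self_type Phi Qs d K u' y))))"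

text \<open>Same notion when the evaluation model X may differ from K (HOL forbids
  polymorphic recursion, so truth of the type conjuncts inside K itself is
  computed by self_type, which is sat_type with X = K).\<close>
fun sat_type :: "'p set \<Rightarrow> gq set \<Rightarrow> nat \<Rightarrow> ('v, 'p) kripke \<Rightarrow> 'v \<Rightarrow> ('w, 'p) kripke \<Rightarrow> 'w \<Rightarrow> bool" where
  "sat_type Phi Qs 0 K u X x = (\<forall>p\<in>Phi. p \<in> lab X x \<longleftrightarrow> p \<in> lab K u)"
| "sat_type Phi Qs (Suc d) K u X x =
     ((\<forall>p\<in>Phi. p \<in> lab X x \<longleftrightarrow> p \<in> lab K u) \<and>
      (\<forall>Q\<in>Qs. \<forall>U. U \<subseteq> V K \<longrightarrow>
         (holdsQ Q X x (\<lambda>y. \<exists>u'\<in>U. sat_type Phi Qs d K u' X y)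
          \<longleftrightarrow> holdsQ Q K u (\<lambda>y. \<exists>u'\<in>U. self_type Phi Qs d K u' y))))"

text \<open>Moves: pick isP2 S f -- the mover chooses s in S; if the mover is Player 2 she
  needs one good choice, if Player 1 every choice must be good for Player 2.
  A mover without an available choice loses.  alt is a binary choice.\<close>
definition pick :: "bool \<Rightarrow> 'x set \<Rightarrow> ('x \<Rightarrow> bool) \<Rightarrow> bool" where
  "pick isP2 S f = (if isP2 then (\<exists>s\<in>S. f s) else (\<forall>s\<in>S. f s))"

definition alt :: "bool \<Rightarrow> bool \<Rightarrow> bool \<Rightarrow> bool" where
  "alt isP2 A B = (if isP2 then A \<or> B else A \<and> B)"

text \<open>One round at pebble position a, b in model K.  t = True iff Player 2 is the
  current attacker.  W x y t' = Player 2 wins the rest of the game from the new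
  round with pebbles on x, y and role flag t'.\<close>
definition game_round :: "gq set \<Rightarrow> ('v, 'p) kripke \<Rightarrow> ('v \<Rightarrow> 'v \<Rightarrow> bool \<Rightarrow> bool)
    \<Rightarrow> 'v \<Rightarrow> 'v \<Rightarrow> bool \<Rightarrow> bool" where
  "game_round Qs K W a b t =
    pick t {(a', b', Q, X). (a', b') \<in> {(a, b), (b, a)} \<and> Q \<in> Qs \<and> X \<subseteq> nbr K a'
                            \<and> inQ Q (nbr K a') X}
     (\<lambda>(a', b', Q, X).
       alt (\<not> t)
         \<comment> \<open>(iv) defender contests X\<close>
         (pick (\<not> t) {(x, y). x \<in> X \<and> y \<in> nbr K a' - X} (\<lambda>(x, y). W x y t))
         \<comment> \<open>(i) attacker chooses P\<close>
         (pick t {P. P \<subseteq> nbr K b'} (\<lambda>P.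
            alt (\<not> t)
              \<comment> \<open>(i) defender contests P\<close>
              (pick (\<not> t) {(p, y). p \<in> P \<and> y \<in> nbr K a'} (\<lambda>(p, y). W p y t))
              \<comment> \<open>(ii) defender chooses X'\<close>
              (pick (\<not> t) {X'. X' \<subseteq> nbr K b' \<and> inQ Q (nbr K b') X' \<and> P \<subseteq> X'} (\<lambda>X'.
                 alt t
                   \<comment> \<open>(iv) attacker contests X', roles swap\<close>
                   (pick t {(x, y). x \<in> X' \<and> y \<in> nbr K b' - X'} (\<lambda>(x, y). W x y (\<not> t)))
                   (alt t
                     \<comment> \<open>(iii) first option, roles swap\<close>
                     (pick t {(n, x). n \<in> nbr K b' - X' \<and> x \<in> X} (\<lambda>(n, x). W n x (\<not> t)))
                     \<comment> \<open>(iii) second option\<close>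
                     (pick t X' (\<lambda>x'. pick (\<not> t) (X \<union> P) (\<lambda>z. W x' z t)))))))))"

text \<open>win2 Qs K k a b t: Player 2 has a winning strategy in the k-round game from
  pebbles on a, b with role flag t.\<close>
primrec win2 :: "gq set \<Rightarrow> ('v, 'p) kripke \<Rightarrow> nat \<Rightarrow> 'v \<Rightarrow> 'v \<Rightarrow> bool \<Rightarrow> bool" where
  "win2 Qs K 0 a b t = (if lab K a \<noteq> lab K b then t else True)"
| "win2 Qs K (Suc k) a b t =
     (if lab K a \<noteq> lab K b then t else game_round Qs K (win2 Qs K k) a b t)"

text \<open>M, w ~^d_Qs N, v: Player 2 (initially the defender) wins the d-round game
  played on the disjoint union, pebbles starting on w and v.\<close>
definition game_equiv :: "gq set \<Rightarrow> nat \<Rightarrow> ('a, 'p) kripke \<Rightarrow> 'a \<Rightarrow> ('b, 'p) kripke \<Rightarrow> 'b \<Rightarrow> bool" where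
  "game_equiv Qs d M w N v = win2 Qs (dunion M N) d (Inl w) (Inr v) False"

end

theory Submission
  imports Defs
begin

text \<open>Work in the single model K = M \<squnion> N, into which the hypothesis on N transfers
  verbatim, and where having the same depth-k type is an equivalence relation.  Player 2
  wins the k-round game from pebbles on a, b as defender when a and b have the same
  depth-k type, and as attacker when they do not.  As defender, she answers the
  attacker's X (below a) and P (below b) with the neighbours X' of b whose type occurs
  in X \<union> P; since a and b agree on \<langle>Q\<rangle> applied to the disjunction of these types, X' is
  a legal answer.  As attacker, she takes a formula \<langle>Q\<rangle>\<psi>, \<psi> a disjunction of depth-k
  types, that holds at one pebble and fails at the other, and plays the \<psi>-successors X
  of the first and, as P, the \<psi>-successors of the second whose type does not occur
  below the first.  Either way every later position has type-equal pebbles when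
  Player 2 defends and type-distinct ones when she attacks, so induction applies.\<close>

lemma game_round_False:
  "game_round Qs K W a b False \<longleftrightarrow>
    (\<forall>a' b' Q X. (a', b') \<in> {(a, b), (b, a)} \<and> Q \<in> Qs \<and> X \<subseteq> nbr K a' \<and> inQ Q (nbr K a') X \<longrightarrow>
      (\<exists>x\<in>X. \<exists>y\<in>nbr K a' - X. W x y False) \<or>
      (\<forall>P. P \<subseteq> nbr K b' \<longrightarrow>
        (\<exists>p\<in>P. \<exists>y\<in>nbr K a'. W p y False) \<or>
        (\<exists>X'. X' \<subseteq> nbr K b' \<and> inQ Q (nbr K b') X' \<and> P \<subseteq> X' \<and>
          (\<forall>x\<in>X'. \<forall>y\<in>nbr K b' - X'. W x y True) \<and>
          (\<forall>n\<in>nbr K b' - X'. \<forall>x\<in>X. W n x True) \<and>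
          (\<forall>x'\<in>X'. \<exists>z\<in>X \<union> P. W x' z False))))"
  unfolding game_round_def pick_def alt_def by (simp add: Bex_def Ball_def imp_conjL)

lemma game_round_True:
  "game_round Qs K W a b True \<longleftrightarrow>
    (\<exists>a' b' Q X. (a', b') \<in> {(a, b), (b, a)} \<and> Q \<in> Qs \<and> X \<subseteq> nbr K a' \<and> inQ Q (nbr K a') X \<and>
      (\<forall>x\<in>X. \<forall>y\<in>nbr K a' - X. W x y True) \<and>
      (\<exists>P. P \<subseteq> nbr K b' \<and>
        (\<forall>p\<in>P. \<forall>y\<in>nbr K a'. W p y True) \<and>
        (\<forall>X'. X' \<subseteq> nbr K b' \<and> inQ Q (nbr K b') X' \<and> P \<subseteq> X' \<longrightarrow>
          (\<exists>x\<in>X'. \<exists>y\<in>nbr K b' - X'. W x y False) \<or>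
          (\<exists>n\<in>nbr K b' - X'. \<exists>x\<in>X. W n x False) \<or>
          (\<exists>x'\<in>X'. \<forall>z\<in>X \<union> P. W x' z True))))"
  unfolding game_round_def pick_def alt_def by (simp add: Bex_def Ball_def imp_conjL)

lemma self_type_refl: "self_type Phi Qs k K u u"
  by (cases k) auto

lemma self_type_sym: "self_type Phi Qs k K u x \<Longrightarrow> self_type Phi Qs k K x u"
  by (cases k) auto

lemma self_type_trans:
  "self_type Phi Qs k K u x \<Longrightarrow> self_type Phi Qs k K x y \<Longrightarrow> self_type Phi Qs k K u y"
  by (cases k) auto

locale kripke_game =
  fixes Phi :: "'p set" and Qs :: "gq set" and K :: "('v, 'p) kripke"
  assumes edges_within: "Ed K \<subseteq> V K \<times> V K"
    and labels_within: "u \<in> V K \<Longrightarrow> lab K u \<subseteq> Phi"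
begin

abbreviation same_type :: "nat \<Rightarrow> 'v \<Rightarrow> 'v \<Rightarrow> bool" where
  "same_type k \<equiv> self_type Phi Qs k K"

lemmas same_type_refl = self_type_refl[of Phi Qs _ K]
  and same_type_sym = self_type_sym[of Phi Qs _ K]
  and same_type_trans = self_type_trans[of Phi Qs _ K]

lemma nbr_subset_V: "nbr K u \<subseteq> V K"
  using edges_within unfolding nbr_def by auto

lemma agree_on_Phi_iff_lab_eq:
  "a \<in> V K \<Longrightarrow> b \<in> V K \<Longrightarrow> (\<forall>p\<in>Phi. p \<in> lab K b \<longleftrightarrow> p \<in> lab K a) \<longleftrightarrow> lab K a = lab K b"
  using labels_within by auto

lemma same_type_0_iff: "a \<in> V K \<Longrightarrow> b \<in> V K \<Longrightarrow> same_type 0 a b \<longleftrightarrow> lab K a = lab K b"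
  using agree_on_Phi_iff_lab_eq by simp

lemma same_type_Suc_iff:
  "a \<in> V K \<Longrightarrow> b \<in> V K \<Longrightarrow> same_type (Suc k) a b \<longleftrightarrow> lab K a = lab K b \<and>
    (\<forall>Q\<in>Qs. \<forall>U. U \<subseteq> V K \<longrightarrow>
      (holdsQ Q K b (\<lambda>y. \<exists>u\<in>U. same_type k u y) \<longleftrightarrow> holdsQ Q K a (\<lambda>y. \<exists>u\<in>U. same_type k u y)))"
  using agree_on_Phi_iff_lab_eq by simp

lemma defender_response_inQ:
  assumes ab: "same_type (Suc k) a b" and "Q \<in> Qs" and X: "inQ Q (nbr K a) X"
    and X_closed: "\<And>x y. x \<in> X \<Longrightarrow> y \<in> nbr K a \<Longrightarrow> same_type k x y \<Longrightarrow> y \<in> X"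
    and P: "P \<subseteq> nbr K b"
    and P_fresh: "\<And>p y. p \<in> P \<Longrightarrow> y \<in> nbr K a \<Longrightarrow> \<not> same_type k p y"
  shows "inQ Q (nbr K b) {y \<in> nbr K b. \<exists>u\<in>X \<union> P. same_type k u y}"
proof -
  let ?\<phi> = "\<lambda>y. \<exists>u\<in>X \<union> P. same_type k u y"
  have "X \<subseteq> nbr K a" using X unfolding inQ_def by simp
  then have "X \<union> P \<subseteq> V K" using P nbr_subset_V by blast
  then have "holdsQ Q K b ?\<phi> \<longleftrightarrow> holdsQ Q K a ?\<phi>"
    using ab \<open>Q \<in> Qs\<close> by simp
  moreover have "{y \<in> nbr K a. ?\<phi> y} = X"
  proof
    show "{y \<in> nbr K a. ?\<phi> y} \<subseteq> X"
      using X_closed P_fresh by blast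
    show "X \<subseteq> {y \<in> nbr K a. ?\<phi> y}"
      using \<open>X \<subseteq> nbr K a\<close> same_type_refl by blast
  qed
  ultimately show ?thesis
    using X unfolding holdsQ_def by simp
qed

lemma defender_answer:
  assumes W_same: "\<And>x y. x \<in> V K \<Longrightarrow> y \<in> V K \<Longrightarrow> same_type k x y \<Longrightarrow> W x y False"
    and W_distinct: "\<And>x y. x \<in> V K \<Longrightarrow> y \<in> V K \<Longrightarrow> \<not> same_type k x y \<Longrightarrow> W x y True"
    and a'b': "same_type (Suc k) a' b'" and "Q \<in> Qs" and X: "inQ Q (nbr K a') X"
    and X_closed: "\<And>x y. x \<in> X \<Longrightarrow> y \<in> nbr K a' \<Longrightarrow> same_type k x y \<Longrightarrow> y \<in> X"
    and P: "P \<subseteq> nbr K b'"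
    and P_fresh: "\<And>p y. p \<in> P \<Longrightarrow> y \<in> nbr K a' \<Longrightarrow> \<not> same_type k p y"
  shows "\<exists>X'. X' \<subseteq> nbr K b' \<and> inQ Q (nbr K b') X' \<and> P \<subseteq> X' \<and>
    (\<forall>x\<in>X'. \<forall>y\<in>nbr K b' - X'. W x y True) \<and>
    (\<forall>n\<in>nbr K b' - X'. \<forall>x\<in>X. W n x True) \<and>
    (\<forall>x'\<in>X'. \<exists>z\<in>X \<union> P. W x' z False)"
proof -
  define X' where "X' = {y \<in> nbr K b'. \<exists>u\<in>X \<union> P. same_type k u y}"
  have "X \<subseteq> nbr K a'"
    using X unfolding inQ_def by simp
  have "inQ Q (nbr K b') X'"
    unfolding X'_def using a'b' \<open>Q \<in> Qs\<close> X X_closed P P_fresh by (rule defender_response_inQ)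
  moreover have "X' \<subseteq> nbr K b'" "P \<subseteq> X'"
    using P same_type_refl unfolding X'_def by auto
  moreover have "\<forall>x\<in>X'. \<forall>y\<in>nbr K b' - X'. W x y True"
  proof (intro ballI)
    fix x y assume "x \<in> X'" "y \<in> nbr K b' - X'"
    then have "\<not> same_type k x y"
      unfolding X'_def by (blast intro: same_type_trans)
    then show "W x y True"
      using \<open>x \<in> X'\<close> \<open>y \<in> nbr K b' - X'\<close> nbr_subset_V W_distinct unfolding X'_def by blast
  qed
  moreover have "\<forall>n\<in>nbr K b' - X'. \<forall>x\<in>X. W n x True"
  proof (intro ballI)
    fix n x assume "n \<in> nbr K b' - X'" "x \<in> X"
    then have "\<not> same_type k n x"
      unfolding X'_def by (blast intro: same_type_sym)
    then show "W n x True"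
      using \<open>n \<in> nbr K b' - X'\<close> \<open>x \<in> X\<close> \<open>X \<subseteq> nbr K a'\<close> nbr_subset_V W_distinct by blast
  qed
  moreover have "\<forall>x'\<in>X'. \<exists>z\<in>X \<union> P. W x' z False"
  proof
    fix x' assume "x' \<in> X'"
    then obtain u where "u \<in> X \<union> P" "same_type k x' u"
      unfolding X'_def by (blast intro: same_type_sym)
    moreover have "x' \<in> V K" "u \<in> V K"
      using \<open>x' \<in> X'\<close> \<open>u \<in> X \<union> P\<close> \<open>X \<subseteq> nbr K a'\<close> P nbr_subset_V unfolding X'_def by blast+
    ultimately show "\<exists>z\<in>X \<union> P. W x' z False"
      using W_same by blast
  qed
  ultimately show ?thesis
    by (intro exI[of _ X']) (simp only:)
qed

lemma defender_wins_round:
  assumes W_same: "\<And>x y. x \<in> V K \<Longrightarrow> y \<in> V K \<Longrightarrow> same_type k x y \<Longrightarrow> W x y False"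
    and W_distinct: "\<And>x y. x \<in> V K \<Longrightarrow> y \<in> V K \<Longrightarrow> \<not> same_type k x y \<Longrightarrow> W x y True"
    and ab: "same_type (Suc k) a b"
  shows "game_round Qs K W a b False"
  unfolding game_round_False
proof (intro allI impI, goal_cases)
  case (1 a' b' Q X)
  then have choice: "(a', b') \<in> {(a, b), (b, a)}" "Q \<in> Qs" "X \<subseteq> nbr K a'" "inQ Q (nbr K a') X"
    by simp_all
  have a'b': "same_type (Suc k) a' b'"
    using choice(1) ab same_type_sym[OF ab] by auto
  show ?case
  proof (cases "\<exists>x\<in>X. \<exists>y\<in>nbr K a' - X. same_type k x y")
    case True
    then obtain x y where "x \<in> X" "y \<in> nbr K a' - X" "same_type k x y" by blast
    then have "W x y False" using choice nbr_subset_V W_same by blast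
    then show ?thesis using \<open>x \<in> X\<close> \<open>y \<in> nbr K a' - X\<close> by blast
  next
    case X_closed: False
    show ?thesis
    proof (rule disjI2, intro allI impI, goal_cases)
      case (1 P)
      show ?case
      proof (cases "\<exists>p\<in>P. \<exists>y\<in>nbr K a'. same_type k p y")
        case True
        then obtain p y where "p \<in> P" "y \<in> nbr K a'" "same_type k p y" by blast
        then have "W p y False" using \<open>P \<subseteq> nbr K b'\<close> nbr_subset_V W_same by blast
        then show ?thesis using \<open>p \<in> P\<close> \<open>y \<in> nbr K a'\<close> by blast
      next
        case P_fresh: False
        have "\<exists>X'. X' \<subseteq> nbr K b' \<and> inQ Q (nbr K b') X' \<and> P \<subseteq> X' \<and>
          (\<forall>x\<in>X'. \<forall>y\<in>nbr K b' - X'. W x y True) \<and>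
          (\<forall>n\<in>nbr K b' - X'. \<forall>x\<in>X. W n x True) \<and>
          (\<forall>x'\<in>X'. \<exists>z\<in>X \<union> P. W x' z False)"
        proof (rule defender_answer[OF W_same W_distinct a'b' choice(2,4) _ \<open>P \<subseteq> nbr K b'\<close>])
          show "\<And>x y. x \<in> X \<Longrightarrow> y \<in> nbr K a' \<Longrightarrow> same_type k x y \<Longrightarrow> y \<in> X"
            using X_closed by blast
          show "\<And>p y. p \<in> P \<Longrightarrow> y \<in> nbr K a' \<Longrightarrow> \<not> same_type k p y"
            using P_fresh by blast
        qed
        then show ?thesis ..
      qed
    qed
  qed
qed

lemma attacker_refutes_answer:
  assumes W_same: "\<And>x y. x \<in> V K \<Longrightarrow> y \<in> V K \<Longrightarrow> same_type k x y \<Longrightarrow> W x y False"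
    and W_distinct: "\<And>x y. x \<in> V K \<Longrightarrow> y \<in> V K \<Longrightarrow> \<not> same_type k x y \<Longrightarrow> W x y True"
    and \<phi>_closed: "\<And>x y. \<phi> x \<Longrightarrow> same_type k x y \<Longrightarrow> \<phi> y"
    and b': "\<not> holdsQ Q K b' \<phi>"
    and X_def: "X = {y \<in> nbr K a'. \<phi> y}"
    and P_def: "P = {y \<in> nbr K b'. \<phi> y \<and> (\<forall>x\<in>nbr K a'. \<not> same_type k x y)}"
    and X': "X' \<subseteq> nbr K b'" "inQ Q (nbr K b') X'" "P \<subseteq> X'"
  shows "(\<exists>x\<in>X'. \<exists>y\<in>nbr K b' - X'. W x y False) \<or> (\<exists>n\<in>nbr K b' - X'. \<exists>x\<in>X. W n x False) \<or>
    (\<exists>x'\<in>X'. \<forall>z\<in>X \<union> P. W x' z True)"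
proof (cases "\<forall>x'\<in>X'. \<phi> x'")
  case False
  then obtain x' where "x' \<in> X'" "\<not> \<phi> x'" by blast
  have "W x' z True" if "z \<in> X \<union> P" for z
  proof -
    have "\<phi> z" using that unfolding X_def P_def by blast
    then have "\<not> same_type k x' z"
      using \<open>\<not> \<phi> x'\<close> \<phi>_closed same_type_sym by blast
    moreover have "x' \<in> V K" "z \<in> V K"
      using that \<open>x' \<in> X'\<close> X'(1) nbr_subset_V unfolding X_def P_def by blast+
    ultimately show ?thesis
      using W_distinct by blast
  qed
  then show ?thesis using \<open>x' \<in> X'\<close> by blast
next
  case True
  have "X' \<noteq> {y \<in> nbr K b'. \<phi> y}"
    using X'(2) b' unfolding holdsQ_def by auto
  with True X'(1) obtain y where y: "y \<in> nbr K b' - X'" "\<phi> y" by blast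
  then have "y \<notin> P" using X'(3) by blast
  then obtain x where x: "x \<in> nbr K a'" "same_type k x y"
    using y unfolding P_def by blast
  then have "x \<in> X"
    using y(2) \<phi>_closed same_type_sym unfolding X_def by blast
  moreover have "W y x False"
    using x y nbr_subset_V same_type_sym W_same by blast
  ultimately show ?thesis using y(1) by blast
qed

lemma attacker_wins_round:
  assumes W_same: "\<And>x y. x \<in> V K \<Longrightarrow> y \<in> V K \<Longrightarrow> same_type k x y \<Longrightarrow> W x y False"
    and W_distinct: "\<And>x y. x \<in> V K \<Longrightarrow> y \<in> V K \<Longrightarrow> \<not> same_type k x y \<Longrightarrow> W x y True"
    and pebbles: "(a', b') \<in> {(a, b), (b, a)}" and "Q \<in> Qs"
    and \<phi>_closed: "\<And>x y. \<phi> x \<Longrightarrow> same_type k x y \<Longrightarrow> \<phi> y"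
    and a': "holdsQ Q K a' \<phi>" and b': "\<not> holdsQ Q K b' \<phi>"
  shows "game_round Qs K W a b True"
proof -
  define X where "X = {y \<in> nbr K a'. \<phi> y}"
  define P where "P = {y \<in> nbr K b'. \<phi> y \<and> (\<forall>x\<in>nbr K a'. \<not> same_type k x y)}"
  have X_inQ: "inQ Q (nbr K a') X"
    using a' unfolding holdsQ_def X_def .
  have X_sub: "X \<subseteq> nbr K a'" and P_sub: "P \<subseteq> nbr K b'"
    unfolding X_def P_def by auto
  have X_contest: "\<forall>x\<in>X. \<forall>y\<in>nbr K a' - X. W x y True"
  proof (intro ballI)
    fix x y assume "x \<in> X" "y \<in> nbr K a' - X"
    then have "\<not> same_type k x y"
      using \<phi>_closed unfolding X_def by blast
    then show "W x y True"
      using \<open>x \<in> X\<close> \<open>y \<in> nbr K a' - X\<close> X_sub nbr_subset_V W_distinct by blast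
  qed
  have P_contest: "\<forall>p\<in>P. \<forall>y\<in>nbr K a'. W p y True"
  proof (intro ballI)
    fix p y assume "p \<in> P" "y \<in> nbr K a'"
    then have "\<not> same_type k p y"
      unfolding P_def by (blast intro: same_type_sym)
    then show "W p y True"
      using \<open>p \<in> P\<close> \<open>y \<in> nbr K a'\<close> P_sub nbr_subset_V W_distinct by blast
  qed
  show ?thesis
    unfolding game_round_True
  proof (intro exI conjI)
    show "(a', b') \<in> {(a, b), (b, a)}" by (rule pebbles)
    show "Q \<in> Qs" by fact
    show "\<forall>X'. X' \<subseteq> nbr K b' \<and> inQ Q (nbr K b') X' \<and> P \<subseteq> X' \<longrightarrow>
      (\<exists>x\<in>X'. \<exists>y\<in>nbr K b' - X'. W x y False) \<or> (\<exists>n\<in>nbr K b' - X'. \<exists>x\<in>X. W n x False) \<or>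
      (\<exists>x'\<in>X'. \<forall>z\<in>X \<union> P. W x' z True)"
      by (intro allI impI, elim conjE)
        (rule attacker_refutes_answer[OF W_same W_distinct \<phi>_closed b' X_def P_def])
  qed (fact X_sub X_inQ X_contest P_sub P_contest)+
qed

lemma win2_same_type:
  "a \<in> V K \<Longrightarrow> b \<in> V K \<Longrightarrow> win2 Qs K k a b (\<not> same_type k a b)"
proof (induction k arbitrary: a b)
  case 0
  then show ?case using same_type_0_iff by simp
next
  case (Suc k)
  have win_same: "win2 Qs K k x y False" if "x \<in> V K" "y \<in> V K" "same_type k x y" for x y
    using Suc.IH[OF that(1,2)] that(3) by simp
  have win_distinct: "win2 Qs K k x y True" if "x \<in> V K" "y \<in> V K" "\<not> same_type k x y" for x y
    using Suc.IH[OF that(1,2)] that(3) by simp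
  show ?case
  proof (cases "same_type (Suc k) a b")
    case True
    then have "lab K a = lab K b"
      using same_type_Suc_iff Suc.prems by blast
    moreover have "game_round Qs K (win2 Qs K k) a b False"
      using win_same win_distinct True by (rule defender_wins_round)
    ultimately show ?thesis using True by simp
  next
    case distinct: False
    show ?thesis
    proof (cases "lab K a = lab K b")
      case False
      then show ?thesis using distinct by simp
    next
      case True
      then obtain Q U where "Q \<in> Qs" "U \<subseteq> V K" and differ:
        "\<not> (holdsQ Q K b (\<lambda>y. \<exists>u\<in>U. same_type k u y) \<longleftrightarrow> holdsQ Q K a (\<lambda>y. \<exists>u\<in>U. same_type k u y))"
        using distinct same_type_Suc_iff Suc.prems by auto
      define \<phi> where "\<phi> = (\<lambda>y. \<exists>u\<in>U. same_type k u y)"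
      obtain a' b' where "(a', b') \<in> {(a, b), (b, a)}" "holdsQ Q K a' \<phi>" "\<not> holdsQ Q K b' \<phi>"
        using differ unfolding \<phi>_def by blast
      moreover have "\<phi> x \<Longrightarrow> same_type k x y \<Longrightarrow> \<phi> y" for x y
        unfolding \<phi>_def using same_type_trans by blast
      ultimately have "game_round Qs K (win2 Qs K k) a b True"
        using win_same win_distinct \<open>Q \<in> Qs\<close> by (intro attacker_wins_round)
      then show ?thesis using True distinct by simp
    qed
  qed
qed

end

lemma kripke_game_dunion:
  assumes "kripke_model Phi M" and "kripke_model Phi N"
  shows "kripke_game Phi (dunion M N)"
proof
  show "Ed (dunion M N) \<subseteq> V (dunion M N) \<times> V (dunion M N)"
    using assms unfolding kripke_model_def dunion_def by auto
  show "lab (dunion M N) u \<subseteq> Phi" if "u \<in> V (dunion M N)" for u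
    using that assms unfolding kripke_model_def dunion_def by (auto; blast)
qed

lemma nbr_dunion_Inr: "nbr (dunion M N) (Inr x) = Inr ` nbr N x"
  unfolding nbr_def dunion_def by auto

lemma holdsQ_dunion_Inr:
  "holdsQ Q (dunion M N) (Inr x) \<psi> \<longleftrightarrow> holdsQ Q N x (\<lambda>y. \<psi> (Inr y))"
proof -
  have "{u \<in> Inr ` nbr N x. \<psi> u} = Inr ` {y \<in> nbr N x. \<psi> (Inr y)}" by auto
  then show ?thesis
    unfolding holdsQ_def inQ_def nbr_dunion_Inr
    by (simp add: card_image inj_image_subset_iff)
qed

lemma sat_type_dunion_Inr:
  "sat_type Phi Qs d (dunion M N) u N x \<longleftrightarrow> self_type Phi Qs d (dunion M N) u (Inr x)"
proof (induction d arbitrary: u x)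
  case 0
  then show ?case by (simp add: dunion_def)
next
  case (Suc d)
  then show ?case by (simp add: holdsQ_dunion_Inr) (simp add: dunion_def)
qed

theorem lemmaB3:
  fixes Phi :: "'p set" and Qs :: "gq set" and d :: nat
    and M :: "('a, 'p) kripke" and N :: "('b, 'p) kripke" and w :: 'a and v :: 'b
  assumes "finite Phi"
    and "kripke_model Phi M" and "kripke_model Phi N"
    and "w \<in> V M" and "v \<in> V N"
    and "sat_type Phi Qs d (dunion M N) (Inl w) N v"
  shows "game_equiv Qs d M w N v"
proof -
  let ?K = "dunion M N"
  interpret kripke_game Phi Qs ?K
    using assms(2,3) by (rule kripke_game_dunion)
  have "Inl w \<in> V ?K" "Inr v \<in> V ?K"
    using assms(4,5) unfolding dunion_def by auto
  then have "win2 Qs ?K d (Inl w) (Inr v) (\<not> same_type d (Inl w) (Inr v))"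
    by (rule win2_same_type)
  moreover have "same_type d (Inl w) (Inr v)"
    using assms(6) by (simp only: sat_type_dunion_Inr)
  ultimately show ?thesis
    unfolding game_equiv_def by simp
qed

end
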